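(* In the setting of finite contexts $\mathcal Z=\{z_1,\dots,z_m\}$ with distribution $p$ and a finite trajectory set $\mathcal T$, assume that for every $z\in\mathcal Z$ the map $\tau\mapsto u(\tau,z)$ is injective on $\mathcal T$, and that the set $X_{\mathrm{ics}}$ of inconsistent pairs is nonempty. Fix $k$. If $$p(z_k)>\max_{(\tau,\tau')\in X_{\mathrm{ics}}}\frac{1+\max_i N(\tau,\tau',z_i)}{2+N(\tau,\tau',z_k)+\max_i N(\tau,\tau',z_i)},$$ then for all $\tau^1,\tau^2\in\mathcal T$ with $u(\tau^1,z_k)>u(\tau^2,z_k)$ we have $BC_p(\tau^1)>BC_p(\tau^2)$, hence $\hat u(\tau^1)>\hat u(\tau^2)$; consequently $\hat u(\tau^1)>\hat u(\tau^2)\iff u(\tau^1,z_k)>u(\tau^2,z_k)$ for all $\tau^1,\tau^2\in\mathcal T$.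
   Context: A pair $(\tau^1,\tau^2)$ is consistent if $u(\tau^1,z)\ge u(\tau^2,z)$ for all $z$ or $u(\tau^1,z)\le u(\tau^2,z)$ for all $z$; otherwise inconsistent. $N(\tau^1,\tau^2,z)=\sum_{\tau\in\mathcal T}\big(\mathbb I\{u(\tau^1,z)>u(\tau,z)>u(\tau^2,z)\}+\mathbb I\{u(\tau^1,z)<u(\tau,z)<u(\tau^2,z)\}\big)$. $O_u(a,b,z)=\tfrac12$ if $u(a,z)=u(b,z)$, $1$ if $u(a,z)>u(b,z)$, $0$ otherwise. $BC_p(a)=\frac{1}{|\mathcal T|}\sum_{b\in\mathcal T}\mathbb E_{z\sim p}[O_u(a,b,z)]$. The learned utility $\hat u:\mathcal T\to\mathbb R$ satisfies $\hat u(a)>\hat u(b)\iff BC_p(a)>BC_p(b)$. *)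

theory Defs
  imports Main "HOL-Library.Library"
begin

definition consistent :: "('t \<Rightarrow> 'z \<Rightarrow> real) \<Rightarrow> 'z set \<Rightarrow> 't \<Rightarrow> 't \<Rightarrow> bool" where
  "consistent u Z a b \<longleftrightarrow> (\<forall>z\<in>Z. u a z \<ge> u b z) \<or> (\<forall>z\<in>Z. u a z \<le> u b z)"

definition inconsistent_pairs :: "('t \<Rightarrow> 'z \<Rightarrow> real) \<Rightarrow> 'z set \<Rightarrow> 't set \<Rightarrow> ('t \<times> 't) set" where
  "inconsistent_pairs u Z T = {(a, b). a \<in> T \<and> b \<in> T \<and> \<not> consistent u Z a b}"

definition Nbetween :: "('t \<Rightarrow> 'z \<Rightarrow> real) \<Rightarrow> 't set \<Rightarrow> 't \<Rightarrow> 't \<Rightarrow> 'z \<Rightarrow> nat" where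
  "Nbetween u T a b z =
     (\<Sum>t\<in>T. (if u a z > u t z \<and> u t z > u b z then 1 else 0)
           + (if u a z < u t z \<and> u t z < u b z then 1 else 0))"

definition O_u :: "('t \<Rightarrow> 'z \<Rightarrow> real) \<Rightarrow> 't \<Rightarrow> 't \<Rightarrow> 'z \<Rightarrow> real" where
  "O_u u a b z = (if u a z = u b z then 1/2 else if u a z > u b z then 1 else 0)"

definition BC :: "('t \<Rightarrow> 'z \<Rightarrow> real) \<Rightarrow> 'z set \<Rightarrow> ('z \<Rightarrow> real) \<Rightarrow> 't set \<Rightarrow> 't \<Rightarrow> real" where
  "BC u Z p T a = (1 / real (card T)) * (\<Sum>b\<in>T. (\<Sum>z\<in>Z. p z * O_u u a b z))"

end

theory Submission
  imports Defs
begin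

text \<open>If every context ranks the trajectories injectively, then for each context z the sum over t
  of O_u(a,t,z) - O_u(b,t,z) is \<open>\<plusminus>(N(a,b,z) + 1)\<close>, the sign being that of u(a,z) - u(b,z):
  every trajectory strictly between a and b contributes 1 and the two endpoints 1/2 each.
  So |T| (BC(a) - BC(b)) is a p-weighted sum of such terms. If a beats b at z_k, that term is
  p(z_k)(N_k + 1), and all others are at least -(M + 1) with M the maximum of N over the
  contexts; the hypothesis on p(z_k) makes p(z_k)(N_k + 1) - (1 - p(z_k))(M + 1) positive.
  For a consistent pair no term is negative, and p(z_k) > 0 suffices; that holds because the
  set of inconsistent pairs is nonempty and every threshold is positive.\<close>

definition Nmax :: "('t \<Rightarrow> 'z \<Rightarrow> real) \<Rightarrow> 'z set \<Rightarrow> 't set \<Rightarrow> 't \<Rightarrow> 't \<Rightarrow> nat" where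
  "Nmax u Z T a b = Max ((\<lambda>z. Nbetween u T a b z) ` Z)"

definition dominance_threshold ::
    "('t \<Rightarrow> 'z \<Rightarrow> real) \<Rightarrow> 'z set \<Rightarrow> 't set \<Rightarrow> 'z \<Rightarrow> 't \<Rightarrow> 't \<Rightarrow> real" where
  "dominance_threshold u Z T zk a b =
     (1 + real (Nmax u Z T a b)) / (2 + real (Nbetween u T a b zk) + real (Nmax u Z T a b))"

lemma dominance_threshold_pos: "dominance_threshold u Z T zk a b > 0"
  unfolding dominance_threshold_def by simp

lemma Nbetween_commute: "Nbetween u T a b z = Nbetween u T b a z"
  unfolding Nbetween_def by (rule sum.cong) auto

lemma Nbetween_le_Nmax: "finite Z \<Longrightarrow> z \<in> Z \<Longrightarrow> Nbetween u T a b z \<le> Nmax u Z T a b"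
  unfolding Nmax_def by simp

lemma finite_inconsistent_pairs: "finite T \<Longrightarrow> finite (inconsistent_pairs u Z T)"
  by (rule finite_subset[of _ "T \<times> T"]) (auto simp: inconsistent_pairs_def)

lemma sum_O_u_diff_of_greater:
  assumes "finite T" and inj: "inj_on (\<lambda>t. u t z) T" and a: "a \<in> T" and b: "b \<in> T"
    and gt: "u a z > u b z"
  shows "(\<Sum>t\<in>T. O_u u a t z - O_u u b t z) = real (Nbetween u T a b z) + 1"
proof -
  have pointwise: "O_u u a t z - O_u u b t z = (if u a z > u t z \<and> u t z > u b z then 1 else 0)
      + (if t = a then 1/2 else 0) + (if t = b then 1/2 else 0)" if t: "t \<in> T" for t
  proof -
    have "u t z = u a z \<Longrightarrow> t = a" "u t z = u b z \<Longrightarrow> t = b"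
      using inj t a b by (auto dest: inj_onD)
    then show ?thesis using gt by (auto simp: O_u_def)
  qed
  have "(\<Sum>t\<in>T. O_u u a t z - O_u u b t z) =
      (\<Sum>t\<in>T. (if u a z > u t z \<and> u t z > u b z then 1 else 0)
        + (if t = a then 1/2 else 0) + (if t = b then 1/2 else 0))"
    using pointwise by (rule sum.cong[OF refl])
  also have "\<dots> = (\<Sum>t\<in>T. if u a z > u t z \<and> u t z > u b z then 1 else 0) + 1"
    using \<open>finite T\<close> a b gt by (simp add: sum.distrib)
  also have "(\<Sum>t\<in>T. if u a z > u t z \<and> u t z > u b z then 1 else 0) = real (Nbetween u T a b z)"
    unfolding Nbetween_def of_nat_sum using gt by (intro sum.cong) auto
  finally show ?thesis .
qed

lemma sum_O_u_diff:
  assumes "finite T" and "inj_on (\<lambda>t. u t z) T" and "a \<in> T" and "b \<in> T"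
  shows "(\<Sum>t\<in>T. O_u u a t z - O_u u b t z) =
     (if u a z > u b z then real (Nbetween u T a b z) + 1
      else if u a z < u b z then - (real (Nbetween u T a b z) + 1) else 0)"
proof -
  consider "u a z > u b z" | "u a z < u b z" | "u a z = u b z" by linarith
  then show ?thesis
  proof cases
    case 1
    then show ?thesis using sum_O_u_diff_of_greater[of T u z a b] assms by simp
  next
    case 2
    have "(\<Sum>t\<in>T. O_u u a t z - O_u u b t z) = - (\<Sum>t\<in>T. O_u u b t z - O_u u a t z)"
      by (simp add: sum_subtractf)
    also have "\<dots> = - (real (Nbetween u T a b z) + 1)"
      using sum_O_u_diff_of_greater[of T u z b a] assms 2 Nbetween_commute[of u T a b z] by simp
    finally show ?thesis using 2 by simp
  next
    case 3
    then have "O_u u a t z = O_u u b t z" for t by (simp add: O_u_def)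
    with 3 show ?thesis by simp
  qed
qed

lemma BC_diff:
  "BC u Z p T a - BC u Z p T b =
     (\<Sum>z\<in>Z. p z * (\<Sum>t\<in>T. O_u u a t z - O_u u b t z)) / real (card T)"
proof -
  have "(\<Sum>t\<in>T. \<Sum>z\<in>Z. p z * O_u u a t z) - (\<Sum>t\<in>T. \<Sum>z\<in>Z. p z * O_u u b t z)
      = (\<Sum>t\<in>T. \<Sum>z\<in>Z. p z * (O_u u a t z - O_u u b t z))"
    by (simp only: sum_subtractf[symmetric] right_diff_distrib)
  also have "\<dots> = (\<Sum>z\<in>Z. p z * (\<Sum>t\<in>T. O_u u a t z - O_u u b t z))"
    by (subst sum.swap) (simp only: sum_distrib_left)
  finally show ?thesis
    unfolding BC_def by (simp add: diff_divide_distrib[symmetric])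
qed

lemma weighted_sum_pos_of_dominant_term:
  fixes D p :: "'z \<Rightarrow> real"
  assumes "finite Z" and p_nonneg: "\<forall>z\<in>Z. p z \<ge> 0" and p_sum: "(\<Sum>z\<in>Z. p z) = 1"
    and k: "k \<in> Z" and lower: "\<forall>z\<in>Z - {k}. D z \<ge> - m"
    and dominant: "p k * (D k + m) > m"
  shows "(\<Sum>z\<in>Z. p z * D z) > 0"
proof -
  have "(\<Sum>z\<in>Z - {k}. p z * (- m)) \<le> (\<Sum>z\<in>Z - {k}. p z * D z)"
    using p_nonneg lower by (intro sum_mono mult_left_mono) auto
  moreover have "(\<Sum>z\<in>Z - {k}. p z) = 1 - p k"
    using \<open>finite Z\<close> k p_sum by (simp add: sum.remove)
  then have "(\<Sum>z\<in>Z - {k}. p z * (- m)) = - m * (1 - p k)"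
    by (metis mult.commute sum_distrib_right)
  moreover have "(\<Sum>z\<in>Z. p z * D z) = p k * D k + (\<Sum>z\<in>Z - {k}. p z * D z)"
    using \<open>finite Z\<close> k by (simp add: sum.remove)
  ultimately show ?thesis
    using dominant by (simp add: algebra_simps)
qed

lemma BC_less_of_less_at_dominant_context:
  assumes finZ: "finite Z" and finT: "finite T"
    and p_nonneg: "\<forall>z\<in>Z. p z \<ge> 0" and p_sum: "(\<Sum>z\<in>Z. p z) = 1"
    and inj: "\<forall>z\<in>Z. inj_on (\<lambda>t. u t z) T"
    and zk: "zk \<in> Z" and t1: "t1 \<in> T" and t2: "t2 \<in> T" and less: "u t2 zk < u t1 zk"
    and p_pos: "p zk > 0"
    and p_large: "\<not> consistent u Z t1 t2 \<Longrightarrow> p zk > dominance_threshold u Z T zk t1 t2"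
  shows "BC u Z p T t2 < BC u Z p T t1"
proof -
  define D where "D z = (\<Sum>t\<in>T. O_u u t1 t z - O_u u t2 t z)" for z
  have D: "D z = (if u t1 z > u t2 z then real (Nbetween u T t1 t2 z) + 1
      else if u t1 z < u t2 z then - (real (Nbetween u T t1 t2 z) + 1) else 0)" if "z \<in> Z" for z
  proof -
    have "inj_on (\<lambda>t. u t z) T" using inj that by blast
    from sum_O_u_diff[of T u z t1 t2, OF finT this t1 t2] show ?thesis unfolding D_def .
  qed
  let ?Nk = "real (Nbetween u T t1 t2 zk)" and ?M = "real (Nmax u Z T t1 t2)"
  have "(\<Sum>z\<in>Z. p z * D z) > 0"
  proof (cases "consistent u Z t1 t2")
    case True
    then have "\<forall>z\<in>Z. u t2 z \<le> u t1 z"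
      unfolding consistent_def using less zk by force
    then have "\<forall>z\<in>Z - {zk}. D z \<ge> - 0" using D by auto
    moreover have "p zk * (D zk + 0) > 0" using D[OF zk] less p_pos by simp
    ultimately show ?thesis
      by (rule weighted_sum_pos_of_dominant_term[OF finZ p_nonneg p_sum zk])
  next
    case False
    have "D z \<ge> - (?M + 1)" if "z \<in> Z" for z
    proof -
      have "real (Nbetween u T t1 t2 z) \<le> ?M" using Nbetween_le_Nmax[OF finZ that] by simp
      with D[OF that] show ?thesis by simp
    qed
    then have "\<forall>z\<in>Z - {zk}. D z \<ge> - (?M + 1)" by blast
    moreover have "p zk * (2 + ?Nk + ?M) > 1 + ?M"
      using p_large[OF False] by (simp add: dominance_threshold_def pos_divide_less_eq add_pos_nonneg)
    then have "p zk * (D zk + (?M + 1)) > ?M + 1" using D[OF zk] less by (simp add: algebra_simps)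
    ultimately show ?thesis
      by (rule weighted_sum_pos_of_dominant_term[OF finZ p_nonneg p_sum zk])
  qed
  moreover have "card T > 0" using t1 finT card_gt_0_iff by blast
  moreover have "BC u Z p T t1 - BC u Z p T t2 = (\<Sum>z\<in>Z. p z * D z) / real (card T)"
    unfolding BC_diff D_def ..
  ultimately show ?thesis by (smt (verit) divide_pos_pos of_nat_0_less_iff)
qed

lemma less_iff_less_of_less_imp_less:
  fixes f :: "'a \<Rightarrow> 'b::linorder" and g :: "'a \<Rightarrow> 'c::linorder"
  assumes "inj_on f A" and "\<forall>a\<in>A. \<forall>b\<in>A. f a < f b \<longrightarrow> g a < g b"
    and "a \<in> A" and "b \<in> A"
  shows "g a < g b \<longleftrightarrow> f a < f b"
proof
  assume "g a < g b"
  show "f a < f b"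
  proof (rule ccontr)
    assume "\<not> f a < f b"
    then consider "f a = f b" | "f b < f a" by fastforce
    then show False
    proof cases
      case 1
      then have "a = b" using assms by (auto dest: inj_onD)
      with \<open>g a < g b\<close> show False by simp
    next
      case 2
      then have "g b < g a" using assms by blast
      with \<open>g a < g b\<close> show False by simp
    qed
  qed
qed (use assms in blast)

theorem mainTheorem4:
  fixes u :: "'t \<Rightarrow> 'z \<Rightarrow> real" and Z :: "'z set" and p :: "'z \<Rightarrow> real"
    and T :: "'t set" and zk :: 'z and uhat :: "'t \<Rightarrow> real"
  assumes finZ: "finite Z" and finT: "finite T"
    and p_nonneg: "\<forall>z\<in>Z. p z \<ge> 0" and p_sum: "(\<Sum>z\<in>Z. p z) = 1"
    and inj: "\<forall>z\<in>Z. inj_on (\<lambda>t. u t z) T"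
    and ics_ne: "inconsistent_pairs u Z T \<noteq> {}"
    and zk: "zk \<in> Z"
    and uhat: "\<forall>a\<in>T. \<forall>b\<in>T. (uhat a > uhat b \<longleftrightarrow> BC u Z p T a > BC u Z p T b)"
    and cond: "p zk > Max ((\<lambda>(a, b).
                   (1 + real (Max ((\<lambda>z. Nbetween u T a b z) ` Z))) /
                   (2 + real (Nbetween u T a b zk) + real (Max ((\<lambda>z. Nbetween u T a b z) ` Z))))
                 ` inconsistent_pairs u Z T)"
  shows "(\<forall>t1\<in>T. \<forall>t2\<in>T. u t1 zk > u t2 zk \<longrightarrow>
            BC u Z p T t1 > BC u Z p T t2 \<and> uhat t1 > uhat t2)
       \<and> (\<forall>t1\<in>T. \<forall>t2\<in>T. uhat t1 > uhat t2 \<longleftrightarrow> u t1 zk > u t2 zk)"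
proof -
  let ?I = "inconsistent_pairs u Z T" and ?thr = "\<lambda>(a, b). dominance_threshold u Z T zk a b"
  have cond': "p zk > Max (?thr ` ?I)"
    using cond unfolding dominance_threshold_def Nmax_def .
  have thr_le_Max: "?thr x \<le> Max (?thr ` ?I)" if "x \<in> ?I" for x
    using that finite_inconsistent_pairs[OF finT, of u Z] by (intro Max_ge) auto
  obtain a b where "(a, b) \<in> ?I" using ics_ne by auto
  then have "dominance_threshold u Z T zk a b \<le> Max (?thr ` ?I)" using thr_le_Max by fastforce
  then have p_pos: "p zk > 0"
    using dominance_threshold_pos[of u Z T zk a b] cond' by linarith
  have p_large: "p zk > dominance_threshold u Z T zk t1 t2"
    if "t1 \<in> T" "t2 \<in> T" "\<not> consistent u Z t1 t2" for t1 t2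
    using thr_le_Max[of "(t1, t2)"] cond' that by (simp add: inconsistent_pairs_def)
  have BC_mono: "\<forall>t1\<in>T. \<forall>t2\<in>T. u t2 zk < u t1 zk \<longrightarrow> BC u Z p T t2 < BC u Z p T t1"
    using BC_less_of_less_at_dominant_context[OF finZ finT p_nonneg p_sum inj zk _ _ _ p_pos]
      p_large by blast
  have "uhat t2 < uhat t1 \<longleftrightarrow> u t2 zk < u t1 zk" if "t1 \<in> T" "t2 \<in> T" for t1 t2
    using less_iff_less_of_less_imp_less[of "\<lambda>t. u t zk" T "BC u Z p T"] inj zk BC_mono uhat that
    by blast
  then show ?thesis using BC_mono by blast
qed

end
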